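(* (i) Let $d$ be even and $R_e=\mathbb Z[u_1,u_2,\dots]$ with $|u_i|=i(d+2)-2$. The formulas $m_i[y|\dots|y]=u_i[1]$ ($i\ge1$), together with the strict unitality conditions for $1$, define a (unital) $A_\infty$ structure $A_e$ on the complex $R_e\cdot 1\oplus R_e\cdot y$, i.e. they satisfy $m\circ m=0$ with no relations among the $u_i$; and for every evenly graded commutative ring $R$ and every Moore algebra $A$ over $R$ of degree $d$ there is a unique graded ring map $f:R_e\to R$ with $f_*A_e=A$. (ii) Let $d$ be odd and $R_o=\mathbb Z[v_1,v_2,\dots]\otimes\mathbb Z[w_1,w_2,\dots]$ with $|v_i|=2i(d+2)-d-3$, $|w_i|=2i(d+2)-2$. The formulas $m_{2i-1}[y|\dots|y]=0$ and $m_{2i}[y|\dots|y]=v_i[y]+w_i[1]$ ($i\ge1$), together with strict unitality for $1$, define a unital $A_\infty$ structure $A_o$ on $R_o\cdot1\oplus R_o\cdot y$ (again $m\circ m=0$ holds with no relations), and for every evenly graded commutative ring $R$ and every Moore algebra $A$ over $R$ of degree $d$ there is a unique graded ring map $f:R_o\to R$ with $f_*A_o=A$.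
   Context: Rings are evenly graded commutative. A unital $A_\infty$-algebra over $R$ is a free complex $A$ with a degree $-1$ coderivation $m$ of the tensor coalgebra $T\Sigma A$ ($[a_1|\dots|a_n]$ denoting $\Sigma a_1\otimes\cdots\otimes\Sigma a_n$), with $m^2=0$, $m_0=0$, $m_1$ the suspended differential, and a unit $1$ of degree $0$ with $m_2[1|a]=[a]=(-1)^{|a|}m_2[a|1]$ and $m_i$ ($i\neq2$) vanishing whenever an argument is $1$. A Moore algebra of degree $d$ over $R$ is such an $A_\infty$-algebra whose underlying complex is free on $1$ (degree $0$) and $y$ (degree $d+1$), with differential $\partial y=x\cdot1$ for some $x\in R$; its structure is determined by the elements $m_i[y|\dots|y]$, $i\ge1$. For a graded ring map $f:R\to R'$ and a Moore algebra $A$ over $R$, $f_*A$ is the Moore algebra over $R'$ obtained by applying $f$ to the coefficients of all $m_i[y|\dots|y]$. *)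

theory Defs
  imports Main "HOL-Library.Poly_Mapping"
begin

definition evenly_graded :: "(int \<Rightarrow> 'r::comm_ring_1 set) \<Rightarrow> bool" where
  "evenly_graded G \<longleftrightarrow>
     (\<forall>n. 0 \<in> G n \<and> (\<forall>x\<in>G n. \<forall>y\<in>G n. x + y \<in> G n) \<and> (\<forall>x\<in>G n. - x \<in> G n)) \<and>
     1 \<in> G 0 \<and>
     (\<forall>n k x y. x \<in> G n \<longrightarrow> y \<in> G k \<longrightarrow> x * y \<in> G (n + k)) \<and>
     (\<forall>n. odd n \<longrightarrow> G n = {0}) \<and>
     (\<forall>x. \<exists>!c :: int \<Rightarrow> 'r. (\<forall>n. c n \<in> G n) \<and> finite {n. c n \<noteq> 0} \<and>
            x = (\<Sum>n\<in>{n. c n \<noteq> 0}. c n))"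

definition graded_ring_hom ::
  "(int \<Rightarrow> 'a::comm_ring_1 set) \<Rightarrow> (int \<Rightarrow> 'b::comm_ring_1 set) \<Rightarrow> ('a \<Rightarrow> 'b) \<Rightarrow> bool" where
  "graded_ring_hom G H f \<longleftrightarrow>
     (\<forall>x y. f (x + y) = f x + f y) \<and> (\<forall>x y. f (x * y) = f x * f y) \<and> f 1 = 1 \<and>
     (\<forall>n x. x \<in> G n \<longrightarrow> f x \<in> H n)"

text \<open>Basis of the suspension \<Sigma>A: False stands for [1] (degree 1),
True stands for [y] (degree d+2).  An element of \<Sigma>A is a pair
(coefficient of [1], coefficient of [y]).  A word in {1,y} of length n is a basis
element [w_1|...|w_n] of (\<Sigma>A)^{\<otimes>n}.

The structure m :: nat \<Rightarrow> 'r \<times> 'r records m i = m_i[y|...|y] (i copies of y);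
m 0 = m_0[] is the curvature.\<close>

definition sdeg :: "int \<Rightarrow> bool \<Rightarrow> int" where
  "sdeg d b = (if b then d + 2 else 1)"

definition ksign :: "int \<Rightarrow> 'r::comm_ring_1" where
  "ksign n = (if even n then 1 else -1)"

text \<open>Value of m_n on a basis word, as forced by strict unitality:
m_2[1|a] = [a], m_2[a|1] = (-1)^|a| [a] with |1| = 0, |y| = d+1,
m_i vanishes on words containing 1 for i \<noteq> 2, and m_i[y|...|y] = m i.\<close>

definition mval :: "int \<Rightarrow> (nat \<Rightarrow> 'r::comm_ring_1 \<times> 'r) \<Rightarrow> bool list \<Rightarrow> 'r \<times> 'r" where
  "mval d m w =
     (if w = [False, False] then (1, 0)
      else if w = [False, True] then (0, 1)
      else if w = [True, False] then (0, ksign (d + 1))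
      else if list_all (\<lambda>b. b) w then m (length w)
      else (0, 0))"

text \<open>The term  \<plusminus> m_{n-k+1}(id^j \<otimes> m_k \<otimes> id^{n-j-k}) applied to the word w, with the
Koszul sign (-1)^(sum of suspended degrees of w_1..w_j).\<close>

definition mm_term :: "int \<Rightarrow> (nat \<Rightarrow> 'r::comm_ring_1 \<times> 'r) \<Rightarrow> bool list \<Rightarrow> nat \<Rightarrow> nat \<Rightarrow> 'r \<times> 'r" where
  "mm_term d m w j k =
     (let pre = take j w; mid = take k (drop j w); post = drop (j + k) w;
          c = mval d m mid; s = ksign (sum_list (map (sdeg d) pre));
          u = mval d m (pre @ [False] @ post); v = mval d m (pre @ [True] @ post)
      in (s * (fst c * fst u + snd c * fst v), s * (fst c * snd u + snd c * snd v)))"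

text \<open>The A-infinity relations: the component of m \<circ> m landing in \<Sigma>A vanishes on every
basis word (equivalently, m \<circ> m = 0 for the coderivation m of T\<Sigma>A).\<close>

definition ainf_relations :: "int \<Rightarrow> (nat \<Rightarrow> 'r::comm_ring_1 \<times> 'r) \<Rightarrow> bool" where
  "ainf_relations d m \<longleftrightarrow>
     (\<forall>w. (\<Sum>k\<in>{0..length w}. \<Sum>j\<in>{0..length w - k}. fst (mm_term d m w j k)) = 0 \<and>
          (\<Sum>k\<in>{0..length w}. \<Sum>j\<in>{0..length w - k}. snd (mm_term d m w j k)) = 0)"

text \<open>Moore algebra of degree d over the graded ring (the type 'r with grading G):
m_0 = 0, m_i[y|...|y] = a[1] + b[y] is of degree -1 (so a has degree i(d+2)-2 and b
has degree i(d+2)-d-3), and m \<circ> m = 0.\<close>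

definition moore_algebra :: "(int \<Rightarrow> 'r::comm_ring_1 set) \<Rightarrow> int \<Rightarrow> (nat \<Rightarrow> 'r \<times> 'r) \<Rightarrow> bool" where
  "moore_algebra G d m \<longleftrightarrow>
     m 0 = (0, 0) \<and>
     (\<forall>i\<ge>1. fst (m i) \<in> G (int i * (d + 2) - 2) \<and> snd (m i) \<in> G (int i * (d + 2) - d - 3)) \<and>
     ainf_relations d m"

definition push :: "('a \<Rightarrow> 'b) \<Rightarrow> (nat \<Rightarrow> 'a \<times> 'a) \<Rightarrow> (nat \<Rightarrow> 'b \<times> 'b)" where
  "push f m = (\<lambda>i. (f (fst (m i)), f (snd (m i))))"

type_synonym 'v zpoly = "('v \<Rightarrow>\<^sub>0 nat) \<Rightarrow>\<^sub>0 int"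

definition pvar :: "'v \<Rightarrow> 'v zpoly" where
  "pvar x = Poly_Mapping.single (Poly_Mapping.single x 1) 1"

definition wdeg :: "('v \<Rightarrow> int) \<Rightarrow> ('v \<Rightarrow>\<^sub>0 nat) \<Rightarrow> int" where
  "wdeg wt \<alpha> = (\<Sum>x\<in>Poly_Mapping.keys \<alpha>. int (Poly_Mapping.lookup \<alpha> x) * wt x)"

definition pgrading :: "('v \<Rightarrow> int) \<Rightarrow> int \<Rightarrow> 'v zpoly set" where
  "pgrading wt n = {p. \<forall>\<alpha>\<in>Poly_Mapping.keys p. wdeg wt \<alpha> = n}"

text \<open>R_e = \<int>[u_1,u_2,...]: variable k :: nat stands for u_{k+1}, |u_i| = i(d+2)-2.\<close>
definition Re_deg :: "int \<Rightarrow> nat \<Rightarrow> int" where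
  "Re_deg d k = int (k + 1) * (d + 2) - 2"

definition Ae :: "nat \<Rightarrow> nat zpoly \<times> nat zpoly" where
  "Ae i = (if i = 0 then (0, 0) else (pvar (i - 1), 0))"

text \<open>R_o = \<int>[v_1,v_2,...] \<otimes> \<int>[w_1,w_2,...] = \<int>[v_1,...,w_1,...]:
Inl k stands for v_{k+1}, Inr k stands for w_{k+1};
|v_i| = 2i(d+2)-d-3, |w_i| = 2i(d+2)-2.\<close>
definition Ro_deg :: "int \<Rightarrow> nat + nat \<Rightarrow> int" where
  "Ro_deg d x = (case x of
      Inl k \<Rightarrow> 2 * int (k + 1) * (d + 2) - d - 3
    | Inr k \<Rightarrow> 2 * int (k + 1) * (d + 2) - 2)"

definition Ao :: "nat \<Rightarrow> (nat + nat) zpoly \<times> (nat + nat) zpoly" where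
  "Ao i = (if i = 0 \<or> odd i then (0, 0)
           else (pvar (Inr (i div 2 - 1)), pvar (Inl (i div 2 - 1))))"

end

theory Submission
  imports Defs "HOL-Library.Product_Plus"
begin

text \<open>Write m_k[y|...|y] = a_k[1] + b_k[y].  Strict unitality fixes m on every word containing
  the unit, and on such words m \<circ> m = 0 reduces to sign conditions on a_k and b_k: the terms
  m_2(..[y|1]..) and m_2(..[1|y]..) of neighbouring positions cancel because
  (-1)^(d+2) = -(-1)^(d+1), so only the ends of the word impose conditions.  On [y|...|y] the
  outputs a_k[1] cancel by unitality, leaving b_k (\<Sum>j\<le>l. (-1)^(j(d+2))) m_(l+1) = 0.  This holds
  for A_e, where b_k = 0, and for A_o, where m_(l+1) \<noteq> 0 forces l to be odd, so that the
  alternating sum has an even number of terms.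
  Over an evenly graded ring the coefficients of odd degree vanish: all b_k if d is even, and
  m_k for all odd k if d is odd.  So a Moore algebra is a free choice of the remaining
  coefficients in the degrees of the u_i, resp. of the v_i and w_i, which is the universal
  property of the polynomial ring.\<close>

section \<open>The A-infinity relations of a Moore algebra\<close>

lemma ksign_add: "ksign (a + b) = (ksign a * ksign b :: 'r::comm_ring_1)"
  by (auto simp: ksign_def)

lemma ksign_0 [simp]: "ksign 0 = 1"
  by (simp add: ksign_def)

lemma ksign_1 [simp]: "ksign 1 = -1"
  by (simp add: ksign_def)

lemma ksign_plus1: "ksign (a + 1) = - (ksign a :: 'r::comm_ring_1)"
  by (auto simp: ksign_def)

lemma ksign_plus2: "ksign (a + 2) = (ksign a :: 'r::comm_ring_1)"
  by (auto simp: ksign_def)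

lemma ksign_cases: "ksign a = (1 :: 'r::comm_ring_1) \<or> ksign a = -1"
  by (simp add: ksign_def)

lemma sum_alternating_ksign:
  assumes "odd c"
  shows "(\<Sum>j\<in>{0..n}. ksign (int j * c)) = (if even n then 1 else 0 :: 'r::comm_ring_1)"
proof (induction n)
  case (Suc n)
  have "(ksign (int (Suc n) * c) :: 'r) = (if even n then -1 else 1)"
    using assms by (simp add: ksign_def)
  then show ?case using Suc by (simp add: atLeast0_atMost_Suc)
qed simp

lemma mval_no_unit:
  assumes "False \<notin> set u"
  shows "mval d m u = m (length u)"
proof -
  have "list_all (\<lambda>b. b) u" using assms by (metis (full_types) list_all_iff)
  moreover have "u \<noteq> [False, False] \<and> u \<noteq> [False, True] \<and> u \<noteq> [True, False]" using assms by auto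
  ultimately show ?thesis unfolding mval_def by simp
qed

lemma mval_unit:
  assumes "False \<in> set u" "length u \<noteq> 2"
  shows "mval d m u = (0, 0)"
proof -
  have "\<not> list_all (\<lambda>b. b) u" using assms by (metis list_all_iff)
  moreover have "u \<noteq> [False, False] \<and> u \<noteq> [False, True] \<and> u \<noteq> [True, False]" using assms by auto
  ultimately show ?thesis unfolding mval_def by simp
qed

lemma mval_length_two:
  "mval d m [False, False] = (1, 0)" "mval d m [False, True] = (0, 1)"
  "mval d m [True, False] = (0, ksign (d + 1))"
  by (simp_all add: mval_def)

lemma mval_single_unit:
  "mval d m (replicate a True @ False # replicate b True) =
     (if a = 0 \<and> b = 1 then (0, 1) else if a = 1 \<and> b = 0 then (0, ksign (d + 1)) else (0, 0))"
proof (cases "a + b = 1")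
  case True
  then have "(a = 0 \<and> b = 1) \<or> (a = 1 \<and> b = 0)" by arith
  then show ?thesis by (auto simp: mval_def)
qed (auto intro: mval_unit)

lemma sum_sdeg_no_unit: "False \<notin> set xs \<Longrightarrow> sum_list (map (sdeg d) xs) = int (length xs) * (d + 2)"
  by (induction xs) (auto simp: sdeg_def algebra_simps)

lemma mm_term_unit_inside:
  "False \<in> set (take k (drop j w)) \<Longrightarrow> j + k \<le> length w \<Longrightarrow> k \<noteq> 2 \<Longrightarrow> mm_term d m w j k = (0, 0)"
  by (simp add: mm_term_def Let_def mval_unit)

lemma mm_term_unit_outside:
  "False \<in> set (take j w) \<or> False \<in> set (drop (j + k) w) \<Longrightarrow> j + k \<le> length w \<Longrightarrow>
    length w - k + 1 \<noteq> 2 \<Longrightarrow> mm_term d m w j k = (0, 0)"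
  by (auto simp: mm_term_def Let_def mval_unit)

lemma mm_term_unit:
  assumes "False \<in> set w" "j + k \<le> length w" "k \<noteq> 2" "k + 1 \<noteq> length w"
  shows "mm_term d m w j k = (0, 0)"
proof (cases "False \<in> set (take k (drop j w))")
  case False
  have "take j w @ take k (drop j w) @ drop (j + k) w = w"
    by (metis append_take_drop_id drop_drop add.commute)
  then have "False \<in> set (take j w) \<or> False \<in> set (drop (j + k) w)"
    using assms(1) False by (metis Un_iff set_append)
  then show ?thesis using assms by (intro mm_term_unit_outside) auto
qed (use assms in \<open>auto intro: mm_term_unit_inside\<close>)

lemma nth_mem_take: "i < length w \<Longrightarrow> i < j \<Longrightarrow> w ! i \<in> set (take j w)"
  by (metis length_take min_less_iff_conj nth_take nth_mem)

lemma nth_mem_drop: "i < length w \<Longrightarrow> j \<le> i \<Longrightarrow> w ! i \<in> set (drop j w)"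
proof -
  assume "i < length w" "j \<le> i"
  then have "drop j w ! (i - j) = w ! i" "i - j < length (drop j w)" by auto
  then show ?thesis by (metis nth_mem)
qed

lemma nth_mem_take_drop:
  "i < length w \<Longrightarrow> j \<le> i \<Longrightarrow> i < j + k \<Longrightarrow> w ! i \<in> set (take k (drop j w))"
proof -
  assume "i < length w" "j \<le> i" "i < j + k"
  then have "take k (drop j w) ! (i - j) = w ! i" "i - j < length (take k (drop j w))" by auto
  then show ?thesis by (metis nth_mem)
qed

definition mm_sum :: "int \<Rightarrow> (nat \<Rightarrow> 'r::comm_ring_1 \<times> 'r) \<Rightarrow> bool list \<Rightarrow> 'r \<times> 'r" where
  "mm_sum d m w = (\<Sum>k\<in>{0..length w}. \<Sum>j\<in>{0..length w - k}. mm_term d m w j k)"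

lemma ainf_relations_iff_mm_sum: "ainf_relations d m \<longleftrightarrow> (\<forall>w. mm_sum d m w = 0)"
  by (simp add: ainf_relations_def mm_sum_def prod_eq_iff fst_sum snd_sum)

lemma mm_sum_short_word:
  assumes m0: "m 0 = (0, 0)"
    and fst1: "ksign (d + 1) * fst (m 1) = - fst (m 1)"
    and snd1: "snd (m 1) = - snd (m 1)"
    and snd2: "ksign (d + 2) * snd (m 2) = - snd (m 2)"
    and w: "False \<in> set w" "length w \<le> 3"
  shows "mm_sum d m w = (0 :: 'r::comm_ring_1 \<times> 'r)"
proof -
  have b1: "snd (m (Suc 0)) + snd (m (Suc 0)) = 0"
    using snd1 by (simp add: eq_neg_iff_add_eq_0)
  have short: "(\<not> a \<longrightarrow> mm_sum d m [a] = 0) \<and> (False \<in> {a, b} \<longrightarrow> mm_sum d m [a, b] = 0) \<and>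
      (False \<in> {a, b, c} \<longrightarrow> mm_sum d m [a, b, c] = 0)" for a b c
  proof (cases "ksign d = (1 :: 'r)")
    case True
    have b2: "snd (m (Suc (Suc 0))) + snd (m (Suc (Suc 0))) = 0"
      using snd2 True by (simp add: ksign_plus2 eq_neg_iff_add_eq_0 numeral_2_eq_2)
    show ?thesis
      apply (cases a; cases b; cases c)
      apply (simp_all add: mm_sum_def atLeast0_atMost_Suc)
      apply (simp_all add: mm_term_def Let_def mval_length_two mval_unit mval_no_unit m0 sdeg_def
          ksign_plus1 ksign_plus2 True zero_prod_def prod_eq_iff)
      apply (simp_all add: eq_neg_iff_add_eq_0 neg_eq_iff_add_eq_0 mult_2 mult_2_right b1 b2)
      done
  next
    case False
    then have minus: "ksign d = (-1 :: 'r)"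
      using ksign_cases by blast
    have a1: "fst (m (Suc 0)) + fst (m (Suc 0)) = 0"
      using fst1 minus by (simp add: ksign_plus1 eq_neg_iff_add_eq_0)
    show ?thesis
      apply (cases a; cases b; cases c)
      apply (simp_all add: mm_sum_def atLeast0_atMost_Suc)
      apply (simp_all add: mm_term_def Let_def mval_length_two mval_unit mval_no_unit m0 sdeg_def
          ksign_plus1 ksign_plus2 minus zero_prod_def prod_eq_iff)
      apply (simp_all add: eq_neg_iff_add_eq_0 neg_eq_iff_add_eq_0 mult_2 mult_2_right b1 a1)
      done
  qed
  have "length w = 1 \<or> length w = 2 \<or> length w = 3"
    using w by (cases "length w") auto
  then show ?thesis
    using w short by (auto simp: length_Suc_conv numeral_eq_Suc)
qed

lemma sum_eq_single:
  assumes "finite S" "a \<in> S" "\<And>x. x \<in> S \<Longrightarrow> x \<noteq> a \<Longrightarrow> f x = 0"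
  shows "sum f S = f a"
  using assms by (simp add: sum.remove sum.neutral)

lemma sum_eq_two:
  assumes "finite S" "a \<in> S" "b \<in> S" "a \<noteq> b" "\<And>x. x \<in> S \<Longrightarrow> x \<noteq> a \<Longrightarrow> x \<noteq> b \<Longrightarrow> f x = 0"
  shows "sum f S = f a + f b"
proof -
  have "sum f S = sum f {a, b}"
    using assms by (intro sum.mono_neutral_right) auto
  then show ?thesis using assms(4) by simp
qed

text \<open>On a word containing the unit, the inner operation m_k vanishes unless k = 2, and the outer
  one m_{n-k+1} vanishes unless it is m_2; only these two families of terms survive.\<close>

lemma mm_sum_unit_word:
  assumes F: "False \<in> set w" and n: "n = length w" "4 \<le> n"
  shows "mm_sum d m w =
    (\<Sum>j\<in>{0..n - 2}. mm_term d m w j 2) + (mm_term d m w 0 (n - 1) + mm_term d m w 1 (n - 1))"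
proof -
  let ?g = "\<lambda>k. \<Sum>j\<in>{0..n - k}. mm_term d m w j k"
  have "mm_sum d m w = sum ?g {0..n}"
    unfolding mm_sum_def n(1) ..
  also have "\<dots> = ?g 2 + ?g (n - 1)"
  proof (rule sum_eq_two)
    fix k assume "k \<in> {0..n}" "k \<noteq> 2" "k \<noteq> n - 1"
    then show "?g k = 0"
      using n F by (intro sum.neutral) (auto simp: mm_term_unit zero_prod_def)
  qed (use n in auto)
  also have "?g (n - 1) = mm_term d m w 0 (n - 1) + mm_term d m w 1 (n - 1)"
  proof -
    have "{0..n - (n - 1)} = {0, 1}" using n by auto
    then show ?thesis by simp
  qed
  finally show ?thesis .
qed

lemma take_two_drop: "j + 2 \<le> length w \<Longrightarrow> take 2 (drop j w) = [w ! j, w ! Suc j]"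
  by (simp add: take_Suc_conv_app_nth numeral_2_eq_2)

lemma mm_sum_two_units:
  assumes n: "n = length w" "4 \<le> n"
    and units: "p < n" "q < n" "p \<noteq> q" "\<not> w ! p" "\<not> w ! q"
  shows "mm_sum d m w = 0"
proof -
  have F: "False \<in> set w" using units n by (metis nth_mem)
  have pairs: "mm_term d m w j 2 = 0" if "j \<in> {0..n - 2}" for j
  proof -
    from that n have jn: "j + 2 \<le> length w" by auto
    show ?thesis
    proof (cases "p < j \<or> q < j \<or> j + 2 \<le> p \<or> j + 2 \<le> q")
      case True
      then have "False \<in> set (take j w) \<or> False \<in> set (drop (j + 2) w)"
        using nth_mem_take[of p w j] nth_mem_take[of q w j] nth_mem_drop[of p w "j + 2"]
          nth_mem_drop[of q w "j + 2"] units n by auto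
      then show ?thesis using mm_term_unit_outside[of j w 2 d m] jn n by (simp add: zero_prod_def)
    next
      case False
      then have "{p, q} = {j, Suc j}" using units(3) by auto
      then have "take 2 (drop j w) = [False, False]"
        using take_two_drop[OF jn] units by (auto simp: doubleton_eq_iff)
      moreover have "mval d m (take j w @ [False] @ drop (j + 2) w) = (0, 0)"
        using jn n by (intro mval_unit) auto
      ultimately show ?thesis
        by (simp add: mm_term_def Let_def mval_length_two zero_prod_def)
    qed
  qed
  have outer: "mm_term d m w j (n - 1) = 0" if "j \<le> 1" for j
  proof -
    have "\<not> w ! i" "j \<le> i" "i < j + (n - 1)" if "i = (if j \<le> p \<and> p < j + (n - 1) then p else q)" for i
      using that units \<open>j \<le> 1\<close> n by auto
    then have "False \<in> set (take (n - 1) (drop j w))"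
      using nth_mem_take_drop[of _ w j "n - 1"] units n by (metis (full_types))
    then show ?thesis using mm_term_unit_inside[of "n - 1" j w d m] that n by (simp add: zero_prod_def)
  qed
  show ?thesis
    unfolding mm_sum_unit_word[OF F n] using pairs outer by simp
qed

context
  fixes w :: "bool list" and p :: nat
  assumes unit_at: "p < length w" "\<not> w ! p"
    and only_unit: "\<And>i. i < length w \<Longrightarrow> i \<noteq> p \<Longrightarrow> w ! i"
    and long: "4 \<le> length w"
begin

lemma single_unit_prefix: "j \<le> p \<Longrightarrow> False \<notin> set (take j w)"
  by (auto simp: in_set_conv_nth dest: only_unit)

lemma single_unit_suffix: "p < j \<Longrightarrow> False \<notin> set (drop j w)"
  by (auto simp: in_set_conv_nth intro!: only_unit)

lemma single_unit_infix: "p < j \<or> j + k \<le> p \<Longrightarrow> False \<notin> set (take k (drop j w))"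
  by (auto simp: in_set_conv_nth intro!: only_unit)

lemma mm_term_pair_with_unit:
  fixes d :: int and m :: "nat \<Rightarrow> 'r::comm_ring_1 \<times> 'r"
  assumes j: "j \<le> p" "p < j + 2" "j + 2 \<le> length w"
  defines "s \<equiv> ksign (int j * (d + 2))" and "c \<equiv> snd (mval d m [w ! j, w ! Suc j])"
    and "M \<equiv> m (length w - 1)"
  shows "mm_term d m w j 2 = (s * c * fst M, s * c * snd M)"
proof -
  have "mval d m (take j w @ [False] @ drop (j + 2) w) = (0, 0)"
    using j long by (intro mval_unit) auto
  moreover have "mval d m (take j w @ [True] @ drop (j + 2) w) = M"
    using single_unit_prefix[of j] single_unit_suffix[of "j + 2"] j
    by (simp add: mval_no_unit M_def Suc_diff_Suc)
  moreover have "sum_list (map (sdeg d) (take j w)) = int j * (d + 2)"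
    using sum_sdeg_no_unit[OF single_unit_prefix[of j]] j by simp
  ultimately show ?thesis
    using j by (simp add: mm_term_def Let_def take_two_drop s_def c_def)
qed

lemma mm_term_outer_left:
  "mm_term d m w 0 (length w - 1) =
    (if p = length w - 1 then (fst (m (length w - 1)), ksign (d + 1) * snd (m (length w - 1))) else 0)"
proof (cases "p = length w - 1")
  case False
  then have "False \<in> set (take (length w - 1) (drop 0 w))"
    using nth_mem_take_drop[of p w 0 "length w - 1"] unit_at by auto
  then show ?thesis
    using mm_term_unit_inside[of "length w - 1" 0 w d m] False long by (simp add: zero_prod_def)
next
  case True
  have "mval d m (take (length w - 1) (drop 0 w)) = m (length w - 1)"
    using single_unit_infix[of 0 "length w - 1"] True long by (simp add: mval_no_unit)
  moreover have "drop (length w - 1) w = [False]"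
    using True unit_at by (metis Cons_nth_drop_Suc Suc_diff_1 drop_all le_refl zero_less_iff_neq_zero
        not_less_zero)
  ultimately show ?thesis
    using True by (simp add: mm_term_def Let_def mval_length_two)
qed

lemma mm_term_outer_right:
  "mm_term d m w 1 (length w - 1) =
    (if p = 0 then (- fst (m (length w - 1)), - snd (m (length w - 1))) else 0)"
proof (cases "p = 0")
  case False
  then have "False \<in> set (take (length w - 1) (drop 1 w))"
    using nth_mem_take_drop[of p w 1 "length w - 1"] unit_at by auto
  then show ?thesis
    using mm_term_unit_inside[of "length w - 1" 1 w d m] False long by (simp add: zero_prod_def)
next
  case True
  have "mval d m (take (length w - 1) (drop 1 w)) = m (length w - 1)"
    using single_unit_infix[of 1 "length w - 1"] True long by (simp add: mval_no_unit)
  moreover have "take 1 w = [False]"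
    using True unit_at by (cases w) auto
  ultimately show ?thesis
    using True by (simp add: mm_term_def Let_def mval_length_two sdeg_def)
qed

lemma mm_sum_single_unit:
  fixes d :: int and m :: "nat \<Rightarrow> 'r::comm_ring_1 \<times> 'r"
  assumes fst_sign: "ksign (int (length w - 2) * (d + 2)) * ksign (d + 1) * fst (m (length w - 1)) =
      - fst (m (length w - 1))"
    and snd_sign: "ksign (int (length w - 2) * (d + 2)) * snd (m (length w - 1)) = - snd (m (length w - 1))"
  shows "mm_sum d m w = 0"
proof -
  define n where "n = length w"
  define M where "M = m (n - 1)"
  define s :: "nat \<Rightarrow> 'r" where "s j = ksign (int j * (d + 2))" for j
  have F: "False \<in> set w"
    using unit_at by (metis nth_mem)
  have away: "mm_term d m w j 2 = 0" if "j \<le> n - 2" "j \<noteq> p" "Suc j \<noteq> p" for j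
  proof -
    have "False \<in> set (take j w) \<or> False \<in> set (drop (j + 2) w)"
      using nth_mem_take[of p w j] nth_mem_drop[of p w "j + 2"] that unit_at n_def by fastforce
    then show ?thesis
      using mm_term_unit_outside[of j w 2 d m] that long n_def by (simp add: zero_prod_def)
  qed
  have at: "mm_term d m w p 2 = (s p * fst M, s p * snd M)" if "p \<le> n - 2"
    using mm_term_pair_with_unit[of p d m] that only_unit[of "Suc p"] unit_at long
    by (simp add: n_def M_def s_def mval_length_two)
  have before: "mm_term d m w (p - 1) 2 = (s (p - 1) * ksign (d + 1) * fst M, s (p - 1) * ksign (d + 1) * snd M)"
    if "0 < p"
    using mm_term_pair_with_unit[of "p - 1" d m] that only_unit[of "p - 1"] unit_at
    by (simp add: n_def M_def s_def mval_length_two)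
  have split: "mm_sum d m w = (\<Sum>j\<in>{0..n - 2}. mm_term d m w j 2) +
      (mm_term d m w 0 (n - 1) + mm_term d m w 1 (n - 1))"
    using mm_sum_unit_word[OF F n_def] long n_def by simp
  consider "p = 0" | "p = n - 1" | "0 < p" "p < n - 1"
    using unit_at n_def by linarith
  then show ?thesis
  proof cases
    case 1
    have "(\<Sum>j\<in>{0..n - 2}. mm_term d m w j 2) = mm_term d m w 0 2"
      by (rule sum_eq_single) (use 1 away in auto)
    then show ?thesis
      using 1 split at long mm_term_outer_left[of d m] mm_term_outer_right[of d m]
      by (simp add: n_def M_def s_def prod_eq_iff)
  next
    case 2
    have "(\<Sum>j\<in>{0..n - 2}. mm_term d m w j 2) = mm_term d m w (p - 1) 2"
      by (rule sum_eq_single) (use 2 long n_def away in auto)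
    then show ?thesis
      using 2 split before long mm_term_outer_left[of d m] mm_term_outer_right[of d m] fst_sign snd_sign
      by (simp add: n_def M_def s_def prod_eq_iff algebra_simps numeral_2_eq_2)
  next
    case 3
    have "(\<Sum>j\<in>{0..n - 2}. mm_term d m w j 2) = mm_term d m w (p - 1) 2 + mm_term d m w p 2"
      by (rule sum_eq_two) (use 3 away in auto)
    moreover have "s p = - s (p - 1) * ksign (d + 1)"
    proof -
      have "s p = ksign (int (p - 1) * (d + 2) + (d + 2))"
        using 3 by (simp add: s_def algebra_simps of_nat_diff)
      also have "\<dots> = s (p - 1) * ksign (d + 2)"
        by (simp only: s_def ksign_add)
      finally show ?thesis by (simp add: ksign_def)
    qed
    ultimately show ?thesis
      using 3 split at before mm_term_outer_left[of d m] mm_term_outer_right[of d m]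
      by (simp add: n_def M_def prod_eq_iff)
  qed
qed

end

lemma mm_term_no_unit:
  assumes "j + k \<le> n"
  shows "mm_term d m (replicate n True) j k =
    (0, ksign (int j * (d + 2)) * fst (m k) *
        snd (mval d m (replicate j True @ False # replicate (n - j - k) True))) +
    (ksign (int j * (d + 2)) * snd (m k) * fst (m (n - k + 1)),
     ksign (int j * (d + 2)) * snd (m k) * snd (m (n - k + 1)))"
proof -
  have "mval d m (replicate j True @ [True] @ replicate (n - j - k) True) = m (n - k + 1)"
    using assms by (subst mval_no_unit) (auto intro!: arg_cong[where f = m])
  moreover have "fst (mval d m (replicate j True @ False # replicate (n - j - k) True)) = 0"
    by (simp add: mval_single_unit)
  moreover have "sum_list (map (sdeg d) (replicate j True)) = int j * (d + 2)"
    by (simp add: sdeg_def sum_list_replicate)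
  ultimately show ?thesis
    using assms by (simp add: mm_term_def Let_def mval_no_unit algebra_simps)
qed

lemma mm_sum_no_unit:
  fixes m :: "nat \<Rightarrow> 'r::comm_ring_1 \<times> 'r"
  assumes y_output: "\<And>k l. snd (m k) * (\<Sum>j\<in>{0..l}. ksign (int j * (d + 2))) * fst (m (Suc l)) = 0 \<and>
      snd (m k) * (\<Sum>j\<in>{0..l}. ksign (int j * (d + 2))) * snd (m (Suc l)) = 0"
  shows "mm_sum d m (replicate n True) = 0"
proof -
  define s :: "nat \<Rightarrow> 'r" where "s j = ksign (int j * (d + 2))" for j
  define U where "U j k = snd (mval d m (replicate j True @ False # replicate (n - j - k) True))" for j k
  have inner_k: "(\<Sum>j\<in>{0..n - k}. mm_term d m (replicate n True) j k) = 0" if "k \<le> n" for k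
  proof -
    have "(\<Sum>j\<in>{0..n - k}. mm_term d m (replicate n True) j k) =
        (\<Sum>j\<in>{0..n - k}. (0, s j * fst (m k) * U j k)) +
        (\<Sum>j\<in>{0..n - k}. (s j * snd (m k) * fst (m (n - k + 1)), s j * snd (m k) * snd (m (n - k + 1))))"
      unfolding sum.distrib[symmetric] using that by (intro sum.cong) (auto simp: mm_term_no_unit s_def U_def)
    also have "(\<Sum>j\<in>{0..n - k}. (0, s j * fst (m k) * U j k)) = 0"
      \<comment> \<open>a_k[1] survives only in m_2([1|y]) and m_2([y|1]), with opposite signs\<close>
    proof (cases "k + 1 = n")
      case True
      then have "n - k = 1" "{0..n - k} = {0, 1}" by auto
      then show ?thesis
        by (simp add: U_def s_def mval_single_unit ksign_def zero_prod_def)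
    next
      case False
      then have "U j k = 0" if "j \<in> {0..n - k}" for j
        using that \<open>k \<le> n\<close> by (auto simp: U_def mval_single_unit)
      then show ?thesis by (simp add: zero_prod_def[symmetric])
    qed
    also have "(\<Sum>j\<in>{0..n - k}. (s j * snd (m k) * fst (m (n - k + 1)), s j * snd (m k) * snd (m (n - k + 1)))) =
        (snd (m k) * (\<Sum>j\<in>{0..n - k}. s j) * fst (m (n - k + 1)),
         snd (m k) * (\<Sum>j\<in>{0..n - k}. s j) * snd (m (n - k + 1)))"
      by (simp add: sum_prod sum_distrib_left sum_distrib_right algebra_simps)
    also have "\<dots> = 0"
      using y_output[of k "n - k"] that by (simp add: s_def zero_prod_def)
    finally show ?thesis by simp
  qed
  show ?thesis
    unfolding mm_sum_def length_replicate by (rule sum.neutral) (use inner_k in auto)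
qed

theorem ainf_relations_if_sign_conditions:
  fixes m :: "nat \<Rightarrow> 'r::comm_ring_1 \<times> 'r"
  assumes m0: "m 0 = (0, 0)"
    and fst_sign: "\<And>i. ksign (int i * (d + 2)) * ksign (d + 1) * fst (m (Suc i)) = - fst (m (Suc i))"
    and snd_sign: "\<And>i. ksign (int i * (d + 2)) * snd (m (Suc i)) = - snd (m (Suc i))"
    and y_output: "\<And>k l. snd (m k) * (\<Sum>j\<in>{0..l}. ksign (int j * (d + 2))) * fst (m (Suc l)) = 0 \<and>
      snd (m k) * (\<Sum>j\<in>{0..l}. ksign (int j * (d + 2))) * snd (m (Suc l)) = 0"
  shows "ainf_relations d m"
  unfolding ainf_relations_iff_mm_sum
proof
  fix w :: "bool list"
  have "False \<notin> set w \<or> (False \<in> set w \<and> length w \<le> 3) \<or>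
    (\<exists>p q. 4 \<le> length w \<and> p < length w \<and> q < length w \<and> p \<noteq> q \<and> \<not> w ! p \<and> \<not> w ! q) \<or>
    (\<exists>p. 4 \<le> length w \<and> p < length w \<and> \<not> w ! p \<and> (\<forall>i<length w. i \<noteq> p \<longrightarrow> w ! i))"
  proof (cases "False \<in> set w \<and> 3 < length w")
    case True
    then obtain p where "p < length w" "\<not> w ! p"
      by (auto simp: in_set_conv_nth)
    then show ?thesis
      using True by (cases "\<exists>q<length w. q \<noteq> p \<and> \<not> w ! q") auto
  qed auto
  then consider "False \<notin> set w" | "False \<in> set w" "length w \<le> 3"
    | p q where "4 \<le> length w" "p < length w" "q < length w" "p \<noteq> q" "\<not> w ! p" "\<not> w ! q"
    | p where "4 \<le> length w" "p < length w" "\<not> w ! p" "\<And>i. i < length w \<Longrightarrow> i \<noteq> p \<Longrightarrow> w ! i"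
    by blast
  then show "mm_sum d m w = 0"
  proof cases
    case 1
    then have "w = replicate (length w) True"
      by (metis (full_types) replicate_length_same)
    then show ?thesis using mm_sum_no_unit[OF y_output] by metis
  next
    case 2
    show ?thesis
      by (rule mm_sum_short_word)
        (use m0 fst_sign[of 0] snd_sign[of 0] snd_sign[of 1] 2 in \<open>simp_all add: numeral_2_eq_2\<close>)
  next
    case 3
    then show ?thesis using mm_sum_two_units by blast
  next
    case 4
    have "length w - 2 = Suc (length w - 2) - 1" "length w - 1 = Suc (length w - 2)"
      using 4 by auto
    then show ?thesis
      using mm_sum_single_unit[OF 4(2,3) 4(4) 4(1)] fst_sign snd_sign by metis
  qed
qed

section \<open>Graded polynomial rings over the integers\<close>

lemma wdeg_superset:
  "finite S \<Longrightarrow> Poly_Mapping.keys a \<subseteq> S \<Longrightarrow> wdeg wt a = (\<Sum>x\<in>S. int (Poly_Mapping.lookup a x) * wt x)"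
  unfolding wdeg_def by (rule sum.mono_neutral_left) (auto simp: in_keys_iff)

lemma wdeg_add: "wdeg wt (a + b) = wdeg wt a + wdeg wt b"
proof -
  let ?S = "Poly_Mapping.keys a \<union> Poly_Mapping.keys b"
  have "wdeg wt (a + b) = (\<Sum>x\<in>?S. int (Poly_Mapping.lookup (a + b) x) * wt x)"
    by (rule wdeg_superset) (auto simp: keys_add)
  also have "\<dots> = (\<Sum>x\<in>?S. int (Poly_Mapping.lookup a x) * wt x) +
      (\<Sum>x\<in>?S. int (Poly_Mapping.lookup b x) * wt x)"
    by (simp add: lookup_add sum.distrib algebra_simps)
  also have "\<dots> = wdeg wt a + wdeg wt b"
    by (subst (1 2) wdeg_superset[of ?S]) auto
  finally show ?thesis .
qed

lemma even_wdeg: "(\<And>x. even (wt x)) \<Longrightarrow> even (wdeg wt a)"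
  unfolding wdeg_def by (intro dvd_sum) auto

lemma pvar_in_pgrading: "pvar x \<in> pgrading wt (wt x)"
  by (simp add: pgrading_def pvar_def wdeg_def)

lemma zero_in_pgrading [simp]: "0 \<in> pgrading wt n"
  by (simp add: pgrading_def)

lemma add_in_pgrading: "p \<in> pgrading wt n \<Longrightarrow> q \<in> pgrading wt n \<Longrightarrow> p + q \<in> pgrading wt n"
  unfolding pgrading_def using keys_add[of p q] by blast

lemma mult_in_pgrading: "p \<in> pgrading wt n \<Longrightarrow> q \<in> pgrading wt k \<Longrightarrow> p * q \<in> pgrading wt (n + k)"
  unfolding pgrading_def using keys_mult[of p q] by (fastforce simp: wdeg_add)

lemma pgrading_odd:
  assumes "\<And>x. even (wt x)" "odd n"
  shows "pgrading wt n = {0}"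
proof -
  have "Poly_Mapping.keys p = {}" if "p \<in> pgrading wt n" for p
    using that assms even_wdeg[of wt] by (fastforce simp: pgrading_def)
  then show ?thesis by auto
qed

definition homogeneous_part :: "('v \<Rightarrow> int) \<Rightarrow> 'v zpoly \<Rightarrow> int \<Rightarrow> 'v zpoly" where
  "homogeneous_part wt p n = Abs_poly_mapping (\<lambda>a. if wdeg wt a = n then Poly_Mapping.lookup p a else 0)"

lemma lookup_homogeneous_part:
  "Poly_Mapping.lookup (homogeneous_part wt p n) a = (if wdeg wt a = n then Poly_Mapping.lookup p a else 0)"
proof -
  have "finite {a. (if wdeg wt a = n then Poly_Mapping.lookup p a else 0) \<noteq> 0}"
    by (rule finite_subset[of _ "Poly_Mapping.keys p"]) (auto simp: in_keys_iff)
  then show ?thesis unfolding homogeneous_part_def by simp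
qed

lemma homogeneous_part_in_pgrading: "homogeneous_part wt p n \<in> pgrading wt n"
  by (auto simp: pgrading_def in_keys_iff lookup_homogeneous_part split: if_splits)

lemma finite_homogeneous_parts: "finite {n. homogeneous_part wt p n \<noteq> 0}"
proof (rule finite_subset)
  show "{n. homogeneous_part wt p n \<noteq> 0} \<subseteq> wdeg wt ` Poly_Mapping.keys p"
    by (auto simp: poly_mapping_eq_iff lookup_homogeneous_part in_keys_iff fun_eq_iff split: if_splits)
qed simp

lemma lookup_sum_pgrading:
  assumes "finite N" "\<And>n. c n \<in> pgrading wt n"
  shows "Poly_Mapping.lookup (\<Sum>n\<in>N. c n) a =
    (if wdeg wt a \<in> N then Poly_Mapping.lookup (c (wdeg wt a)) a else 0)"
proof -
  have "Poly_Mapping.lookup (c n) a = (if n = wdeg wt a then Poly_Mapping.lookup (c (wdeg wt a)) a else 0)"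
    for n
    using assms(2)[of n] by (auto simp: pgrading_def in_keys_iff)
  then show ?thesis
    using assms(1) by (simp add: lookup_sum sum.delta')
qed

lemma homogeneous_decomposition:
  "\<exists>!c. (\<forall>n. c n \<in> pgrading wt n) \<and> finite {n. c n \<noteq> 0} \<and> p = (\<Sum>n\<in>{n. c n \<noteq> 0}. c n)"
proof (rule ex1I)
  let ?H = "homogeneous_part wt p"
  have "Poly_Mapping.lookup p a = Poly_Mapping.lookup (\<Sum>n\<in>{n. ?H n \<noteq> 0}. ?H n) a" for a
  proof -
    have "Poly_Mapping.lookup p a = Poly_Mapping.lookup (?H (wdeg wt a)) a"
      by (simp add: lookup_homogeneous_part)
    then show ?thesis
      using lookup_sum_pgrading[where c = ?H, OF finite_homogeneous_parts[of wt p] homogeneous_part_in_pgrading]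
      by auto
  qed
  then show "(\<forall>n. ?H n \<in> pgrading wt n) \<and> finite {n. ?H n \<noteq> 0} \<and> p = (\<Sum>n\<in>{n. ?H n \<noteq> 0}. ?H n)"
    by (simp add: homogeneous_part_in_pgrading finite_homogeneous_parts poly_mapping_eqI)
next
  fix c assume c: "(\<forall>n. c n \<in> pgrading wt n) \<and> finite {n. c n \<noteq> 0} \<and> p = (\<Sum>n\<in>{n. c n \<noteq> 0}. c n)"
  then have cn: "c n \<in> pgrading wt n" for n
    by blast
  show "c = homogeneous_part wt p"
  proof (intro ext poly_mapping_eqI)
    fix n a
    show "Poly_Mapping.lookup (c n) a = Poly_Mapping.lookup (homogeneous_part wt p n) a"
    proof (cases "wdeg wt a = n")
      case True
      then have "Poly_Mapping.lookup p a = Poly_Mapping.lookup (c n) a"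
        using c lookup_sum_pgrading[where N = "{n. c n \<noteq> 0}" and a = a, OF _ cn] by auto
      then show ?thesis using True by (simp add: lookup_homogeneous_part)
    next
      case False
      then show ?thesis
        using cn[of n] by (auto simp: lookup_homogeneous_part pgrading_def in_keys_iff)
    qed
  qed
qed

lemma evenly_graded_pgrading:
  assumes "\<And>x. even (wt x)"
  shows "evenly_graded (pgrading wt)"
  unfolding evenly_graded_def
proof (intro conjI allI impI ballI)
  show "odd n \<Longrightarrow> pgrading wt n = {0}" for n
    using pgrading_odd[OF assms] .
qed (auto simp: add_in_pgrading mult_in_pgrading homogeneous_decomposition,
    auto simp: pgrading_def wdeg_def)

definition mono_eval :: "('v \<Rightarrow> 'r::comm_ring_1) \<Rightarrow> ('v \<Rightarrow>\<^sub>0 nat) \<Rightarrow> 'r" where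
  "mono_eval g a = (\<Prod>x\<in>Poly_Mapping.keys a. g x ^ Poly_Mapping.lookup a x)"

definition poly_eval :: "('v \<Rightarrow> 'r::comm_ring_1) \<Rightarrow> 'v zpoly \<Rightarrow> 'r" where
  "poly_eval g p = (\<Sum>a\<in>Poly_Mapping.keys p. of_int (Poly_Mapping.lookup p a) * mono_eval g a)"

lemma mono_eval_superset:
  "finite S \<Longrightarrow> Poly_Mapping.keys a \<subseteq> S \<Longrightarrow> mono_eval g a = (\<Prod>x\<in>S. g x ^ Poly_Mapping.lookup a x)"
  unfolding mono_eval_def by (rule prod.mono_neutral_left) (auto simp: in_keys_iff)

lemma mono_eval_add: "mono_eval g (a + b) = mono_eval g a * mono_eval g b"
proof -
  let ?S = "Poly_Mapping.keys a \<union> Poly_Mapping.keys b"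
  have "mono_eval g (a + b) = (\<Prod>x\<in>?S. g x ^ Poly_Mapping.lookup (a + b) x)"
    by (rule mono_eval_superset) (auto simp: keys_add)
  also have "\<dots> = (\<Prod>x\<in>?S. g x ^ Poly_Mapping.lookup a x) * (\<Prod>x\<in>?S. g x ^ Poly_Mapping.lookup b x)"
    by (simp add: lookup_add power_add prod.distrib)
  also have "\<dots> = mono_eval g a * mono_eval g b"
    by (subst (1 2) mono_eval_superset[of ?S]) auto
  finally show ?thesis .
qed

lemma poly_eval_superset:
  "finite S \<Longrightarrow> Poly_Mapping.keys p \<subseteq> S \<Longrightarrow>
    poly_eval g p = (\<Sum>a\<in>S. of_int (Poly_Mapping.lookup p a) * mono_eval g a)"
  unfolding poly_eval_def by (rule sum.mono_neutral_left) (auto simp: in_keys_iff)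

lemma poly_eval_add: "poly_eval g (p + q) = poly_eval g p + poly_eval g q"
proof -
  let ?S = "Poly_Mapping.keys p \<union> Poly_Mapping.keys q"
  have "poly_eval g (p + q) = (\<Sum>a\<in>?S. of_int (Poly_Mapping.lookup (p + q) a) * mono_eval g a)"
    by (rule poly_eval_superset) (auto simp: keys_add)
  also have "\<dots> = (\<Sum>a\<in>?S. of_int (Poly_Mapping.lookup p a) * mono_eval g a) +
      (\<Sum>a\<in>?S. of_int (Poly_Mapping.lookup q a) * mono_eval g a)"
    by (simp add: lookup_add sum.distrib algebra_simps)
  also have "\<dots> = poly_eval g p + poly_eval g q"
    by (subst (1 2) poly_eval_superset[of ?S]) auto
  finally show ?thesis .
qed

lemma poly_eval_diff: "poly_eval g (p - q) = poly_eval g p - poly_eval g q"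
  using poly_eval_add[of g "p - q" q] by simp

lemma poly_eval_zero [simp]: "poly_eval g 0 = 0"
  by (simp add: poly_eval_def)

lemma poly_eval_frag_of [simp]: "poly_eval g (frag_of a) = mono_eval g a"
  by (simp add: poly_eval_def)

lemma poly_eval_one: "poly_eval g 1 = 1"
  using poly_eval_frag_of[of g 0] by (simp add: mono_eval_def)

lemma poly_eval_pvar: "poly_eval g (pvar x) = g x"
  by (simp add: pvar_def mono_eval_def)

lemma poly_eval_mult: "poly_eval g (p * q) = poly_eval g p * poly_eval g q"
proof -
  have frag_mult: "poly_eval g (frag_of a * q) = mono_eval g a * poly_eval g q" for a
    using subset_UNIV
    by (induction q rule: frag_induction)
      (simp_all add: mult_single mono_eval_add right_diff_distrib poly_eval_diff)
  show ?thesis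
    using subset_UNIV
    by (induction p rule: frag_induction)
      (simp_all add: frag_mult left_diff_distrib poly_eval_diff)
qed

lemma frag_of_eq_prod_pvar: "frag_of a = (\<Prod>x\<in>Poly_Mapping.keys a. pvar x ^ Poly_Mapping.lookup a x)"
proof -
  have frag_of_add: "frag_of (u + v) = frag_of u * frag_of v" for u v :: "'a \<Rightarrow>\<^sub>0 nat"
    by (simp add: mult_single)
  have frag_of_single: "frag_of (Poly_Mapping.single x k) = pvar x ^ k" for x :: 'a and k
  proof (induction k)
    case (Suc k)
    have "Poly_Mapping.single x (Suc k) = Poly_Mapping.single x 1 + Poly_Mapping.single x k"
      by (simp add: single_add[symmetric])
    then show ?case using Suc by (simp add: frag_of_add pvar_def)
  qed simp
  have frag_of_sum: "frag_of (\<Sum>x\<in>S. s x) = (\<Prod>x\<in>S. frag_of (s x))"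
    if "finite S" for S and s :: "'a \<Rightarrow> ('a \<Rightarrow>\<^sub>0 nat)"
    using that by (induction S rule: finite_induct) (simp_all add: frag_of_add)
  have "a = (\<Sum>x\<in>Poly_Mapping.keys a. Poly_Mapping.single x (Poly_Mapping.lookup a x))"
    by (rule poly_mapping_eqI) (simp add: lookup_sum lookup_single when_def in_keys_iff sum.delta)
  then have "frag_of a = frag_of (\<Sum>x\<in>Poly_Mapping.keys a. Poly_Mapping.single x (Poly_Mapping.lookup a x))"
    by simp
  then show ?thesis
    by (simp add: frag_of_sum frag_of_single)
qed

lemma ring_hom_eq_poly_eval:
  fixes h :: "'v zpoly \<Rightarrow> 'r::comm_ring_1"
  assumes add: "\<And>p q. h (p + q) = h p + h q" and mult: "\<And>p q. h (p * q) = h p * h q"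
    and one: "h 1 = 1" and pvar: "\<And>x. h (pvar x) = g x"
  shows "h = poly_eval g"
proof
  have zero: "h 0 = 0"
    using add[of 0 0] by simp
  have diff: "h (p - q) = h p - h q" for p q
    using add[of "p - q" q] by simp
  have prod: "h (\<Prod>x\<in>S. f x) = (\<Prod>x\<in>S. h (f x))" for S and f :: "'v \<Rightarrow> 'v zpoly"
    by (induction S rule: infinite_finite_induct) (simp_all add: one mult)
  have power: "h (p ^ k) = h p ^ k" for p k
    by (induction k) (simp_all add: one mult)
  have frag: "h (frag_of a) = mono_eval g a" for a
    by (simp add: frag_of_eq_prod_pvar[of a] prod power pvar mono_eval_def)
  fix p
  show "h p = poly_eval g p"
    using subset_UNIV
    by (induction p rule: frag_induction) (simp_all add: zero diff poly_eval_diff frag)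
qed

lemma graded_ring_hom_zero: "graded_ring_hom G H f \<Longrightarrow> f 0 = 0"
  unfolding graded_ring_hom_def by (metis add_cancel_right_right add_0)

context
  fixes G :: "int \<Rightarrow> 'r::comm_ring_1 set"
  assumes G: "evenly_graded G"
begin

lemma graded_zero: "0 \<in> G n"
  using G unfolding evenly_graded_def by blast

lemma graded_add: "x \<in> G n \<Longrightarrow> y \<in> G n \<Longrightarrow> x + y \<in> G n"
  using G unfolding evenly_graded_def by blast

lemma graded_uminus: "x \<in> G n \<Longrightarrow> - x \<in> G n"
  using G unfolding evenly_graded_def by blast

lemma graded_one: "1 \<in> G 0"
  using G unfolding evenly_graded_def by blast

lemma graded_mult: "x \<in> G n \<Longrightarrow> y \<in> G k \<Longrightarrow> x * y \<in> G (n + k)"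
  using G unfolding evenly_graded_def by blast

lemma graded_odd: "odd n \<Longrightarrow> x \<in> G n \<Longrightarrow> x = 0"
  using G unfolding evenly_graded_def by blast

lemma graded_sum: "(\<And>i. i \<in> S \<Longrightarrow> f i \<in> G n) \<Longrightarrow> sum f S \<in> G n"
  by (induction S rule: infinite_finite_induct) (auto intro: graded_zero graded_add)

lemma graded_prod: "finite S \<Longrightarrow> (\<And>i. i \<in> S \<Longrightarrow> f i \<in> G (k i)) \<Longrightarrow> prod f S \<in> G (\<Sum>i\<in>S. k i)"
  by (induction S rule: finite_induct) (auto intro: graded_one graded_mult)

lemma graded_power: "x \<in> G k \<Longrightarrow> x ^ j \<in> G (int j * k)"
  by (induction j) (auto simp: algebra_simps intro: graded_one dest: graded_mult)

lemma graded_of_int: "of_int c \<in> G 0"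
proof -
  have "of_nat j \<in> G 0" for j
    by (induction j) (auto intro: graded_zero graded_add graded_one)
  then show ?thesis
    by (metis graded_uminus of_int_of_nat of_int_minus minus_minus)
qed

lemma graded_ring_hom_poly_eval:
  assumes g: "\<And>x. g x \<in> G (wt x)"
  shows "graded_ring_hom (pgrading wt) G (poly_eval g)"
proof -
  have "mono_eval g a \<in> G (wdeg wt a)" for a
    unfolding mono_eval_def wdeg_def by (rule graded_prod) (auto intro: graded_power g)
  then have "poly_eval g p \<in> G n" if "p \<in> pgrading wt n" for p n
    using that unfolding poly_eval_def pgrading_def
    by (intro graded_sum) (metis (mono_tags) add_0 graded_mult graded_of_int mem_Collect_eq)
  then show ?thesis
    unfolding graded_ring_hom_def using poly_eval_add poly_eval_mult poly_eval_one by blast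
qed

lemma graded_ring_hom_pvar_iff:
  assumes g: "\<And>x. g x \<in> G (wt x)"
  shows "graded_ring_hom (pgrading wt) G f \<and> (\<forall>x. f (pvar x) = g x) \<longleftrightarrow> f = poly_eval g"
proof
  assume "graded_ring_hom (pgrading wt) G f \<and> (\<forall>x. f (pvar x) = g x)"
  then show "f = poly_eval g"
    by (intro ring_hom_eq_poly_eval) (auto simp: graded_ring_hom_def)
qed (simp add: graded_ring_hom_poly_eval[OF g] poly_eval_pvar)

end

section \<open>The universal Moore algebras\<close>

lemma moore_algebra_degrees:
  assumes "moore_algebra G d m" "1 \<le> i"
  shows "fst (m i) \<in> G (int i * (d + 2) - 2)" "snd (m i) \<in> G (int i * (d + 2) - d - 3)"
  using assms unfolding moore_algebra_def by blast+

lemma moore_algebra_snd_eq_zero: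
  assumes "evenly_graded G" "moore_algebra G d m" "even d"
  shows "snd (m i) = 0"
proof (cases "i = 0")
  case True
  then show ?thesis using assms(2) by (simp add: moore_algebra_def)
next
  case False
  have "odd (int i * (d + 2) - d - 3)"
    using assms(3) by simp
  moreover have "snd (m i) \<in> G (int i * (d + 2) - d - 3)"
    using moore_algebra_degrees(2)[OF assms(2), of i] False by simp
  ultimately show ?thesis
    by (rule graded_odd[OF assms(1)])
qed

lemma moore_algebra_odd_eq_zero:
  assumes "evenly_graded G" "moore_algebra G d m" "odd d" "odd i"
  shows "m i = (0, 0)"
proof -
  have "1 \<le> i"
    using assms(4) by (cases i) auto
  moreover have "odd (int i * (d + 2) - 2)" "odd (int i * (d + 2) - d - 3)"
    using assms(3,4) by simp_all
  ultimately show ?thesis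
    using graded_odd[OF assms(1)] moore_algebra_degrees[OF assms(2)] by (metis prod.collapse)
qed

lemma moore_algebra_Ae:
  assumes "even d"
  shows "moore_algebra (pgrading (Re_deg d)) d Ae"
  unfolding moore_algebra_def
proof (intro conjI allI impI)
  fix i :: nat assume "1 \<le> i"
  moreover have "Re_deg d (i - 1) = int i * (d + 2) - 2"
    using \<open>1 \<le> i\<close> by (simp add: Re_deg_def of_nat_diff)
  ultimately show "fst (Ae i) \<in> pgrading (Re_deg d) (int i * (d + 2) - 2)"
    "snd (Ae i) \<in> pgrading (Re_deg d) (int i * (d + 2) - d - 3)"
    using pvar_in_pgrading[of "i - 1" "Re_deg d"] by (simp_all add: Ae_def)
next
  show "ainf_relations d Ae"
    by (rule ainf_relations_if_sign_conditions) (use assms in \<open>simp_all add: Ae_def ksign_def\<close>)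
qed (simp add: Ae_def)

lemma push_Ae_eq_iff:
  assumes "f 0 = 0" "m 0 = (0, 0)" "\<And>i. snd (m i) = 0"
  shows "push f Ae = m \<longleftrightarrow> (\<forall>k. f (pvar k) = fst (m (Suc k)))"
proof
  assume "push f Ae = m"
  then have "push f Ae (Suc k) = m (Suc k)" for k
    by simp
  then show "\<forall>k. f (pvar k) = fst (m (Suc k))"
    by (simp add: push_def Ae_def prod_eq_iff)
next
  assume "\<forall>k. f (pvar k) = fst (m (Suc k))"
  then show "push f Ae = m"
    using assms by (auto simp: push_def Ae_def fun_eq_iff prod_eq_iff gr0_conv_Suc)
qed

lemma Ae_universal:
  fixes G :: "int \<Rightarrow> 'r::comm_ring_1 set"
  assumes d: "even d" and G: "evenly_graded G" and m: "moore_algebra G d m"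
  shows "\<exists>!f. graded_ring_hom (pgrading (Re_deg d)) G f \<and> push f Ae = m"
proof -
  define g where "g k = fst (m (Suc k))" for k
  have g: "g k \<in> G (Re_deg d k)" for k
    using moore_algebra_degrees(1)[OF m, of "Suc k"] by (simp add: g_def Re_deg_def)
  have m0: "m 0 = (0, 0)"
    using m by (simp add: moore_algebra_def)
  have "graded_ring_hom (pgrading (Re_deg d)) G f \<and> push f Ae = m \<longleftrightarrow> f = poly_eval g"
    for f :: "nat zpoly \<Rightarrow> 'r"
  proof -
    have "graded_ring_hom (pgrading (Re_deg d)) G f \<and> push f Ae = m \<longleftrightarrow>
        graded_ring_hom (pgrading (Re_deg d)) G f \<and> (\<forall>k. f (pvar k) = g k)"
      using graded_ring_hom_zero[of _ G f]
        push_Ae_eq_iff[where m = m, OF _ m0 moore_algebra_snd_eq_zero[OF G m d]]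
      by (auto simp: g_def)
    also have "\<dots> \<longleftrightarrow> f = poly_eval g"
      by (rule graded_ring_hom_pvar_iff[OF G g])
    finally show ?thesis .
  qed
  then show ?thesis
    by simp
qed

lemma Ao_vanishes: "i = 0 \<or> odd i \<Longrightarrow> Ao i = (0, 0)"
  by (auto simp: Ao_def)

lemma Ao_even: "Ao (2 * k + 2) = (pvar (Inr k), pvar (Inl k))"
  by (simp add: Ao_def)

lemma even_nat_cases:
  fixes i :: nat
  obtains "i = 0 \<or> odd i" | k where "i = 2 * k + 2"
proof (cases "i = 0 \<or> odd i")
  case False
  then have "i = 2 * (i div 2 - 1) + 2"
    by auto
  then show thesis
    by (rule that(2))
qed (rule that(1))

lemma moore_algebra_Ao:
  assumes d: "odd d"
  shows "moore_algebra (pgrading (Ro_deg d)) d Ao"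
  unfolding moore_algebra_def
proof (intro conjI allI impI)
  fix i :: nat
  have "fst (Ao i) \<in> pgrading (Ro_deg d) (int i * (d + 2) - 2) \<and>
    snd (Ao i) \<in> pgrading (Ro_deg d) (int i * (d + 2) - d - 3)"
  proof (cases i rule: even_nat_cases)
    case (2 k)
    have "Ro_deg d (Inr k) = int i * (d + 2) - 2" "Ro_deg d (Inl k) = int i * (d + 2) - d - 3"
      unfolding 2 Ro_deg_def by (simp_all add: algebra_simps)
    then show ?thesis
      using pvar_in_pgrading[of "Inr k" "Ro_deg d"] pvar_in_pgrading[of "Inl k" "Ro_deg d"]
      unfolding 2 Ao_even by simp
  qed (simp add: Ao_vanishes)
  then show "fst (Ao i) \<in> pgrading (Ro_deg d) (int i * (d + 2) - 2)"
    "snd (Ao i) \<in> pgrading (Ro_deg d) (int i * (d + 2) - d - 3)"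
    by simp_all
next
  have signs: "ksign (int i * (d + 2)) = (-1 :: (nat + nat) zpoly)" "ksign (d + 1) = (1 :: (nat + nat) zpoly)"
    if "odd i" for i
    using that d by (simp_all add: ksign_def)
  show "ainf_relations d Ao"
  proof (rule ainf_relations_if_sign_conditions)
    fix i
    show "ksign (int i * (d + 2)) * ksign (d + 1) * fst (Ao (Suc i)) = - fst (Ao (Suc i))"
      "ksign (int i * (d + 2)) * snd (Ao (Suc i)) = - snd (Ao (Suc i))"
      using signs[of i] Ao_vanishes[of "Suc i"] by (cases "odd i"; simp)+
  next
    fix k l
    show "snd (Ao k) * (\<Sum>j\<in>{0..l}. ksign (int j * (d + 2))) * fst (Ao (Suc l)) = 0 \<and>
      snd (Ao k) * (\<Sum>j\<in>{0..l}. ksign (int j * (d + 2))) * snd (Ao (Suc l)) = 0"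
    proof (cases "odd l")
      case True
      then have "(\<Sum>j\<in>{0..l}. ksign (int j * (d + 2))) = (0 :: (nat + nat) zpoly)"
        using sum_alternating_ksign[of "d + 2" l] d by simp
      then show ?thesis by simp
    qed (simp add: Ao_vanishes)
  qed (simp add: Ao_def)
qed (simp add: Ao_def)

lemma push_Ao_even: "push f Ao (2 * k + 2) = (f (pvar (Inr k)), f (pvar (Inl k)))"
  by (simp add: push_def Ao_def)

lemma push_Ao_eq_iff:
  assumes "f 0 = 0" "m 0 = (0, 0)" "\<And>i. odd i \<Longrightarrow> m i = (0, 0)"
  shows "push f Ao = m \<longleftrightarrow>
    (\<forall>k. f (pvar (Inr k)) = fst (m (2 * k + 2)) \<and> f (pvar (Inl k)) = snd (m (2 * k + 2)))"
proof
  assume "push f Ao = m"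
  then show "\<forall>k. f (pvar (Inr k)) = fst (m (2 * k + 2)) \<and> f (pvar (Inl k)) = snd (m (2 * k + 2))"
    by (metis push_Ao_even fst_conv snd_conv)
next
  assume pvar: "\<forall>k. f (pvar (Inr k)) = fst (m (2 * k + 2)) \<and> f (pvar (Inl k)) = snd (m (2 * k + 2))"
  show "push f Ao = m"
  proof
    fix i
    show "push f Ao i = m i"
    proof (cases i rule: even_nat_cases)
      case 1
      then show ?thesis using assms by (auto simp: push_def Ao_vanishes)
    next
      case (2 k)
      then show ?thesis using pvar push_Ao_even[of f k] by simp
    qed
  qed
qed

lemma Ao_universal:
  fixes G :: "int \<Rightarrow> 'r::comm_ring_1 set"
  assumes d: "odd d" and G: "evenly_graded G" and m: "moore_algebra G d m"
  shows "\<exists>!f. graded_ring_hom (pgrading (Ro_deg d)) G f \<and> push f Ao = m"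
proof -
  define g where "g x = (case x of Inl k \<Rightarrow> snd (m (2 * k + 2)) | Inr k \<Rightarrow> fst (m (2 * k + 2)))" for x
  have g: "g x \<in> G (Ro_deg d x)" for x
  proof (cases x)
    case (Inl k)
    then show ?thesis
      using moore_algebra_degrees(2)[OF m, of "2 * k + 2"] by (simp add: g_def Ro_deg_def algebra_simps)
  next
    case (Inr k)
    then show ?thesis
      using moore_algebra_degrees(1)[OF m, of "2 * k + 2"] by (simp add: g_def Ro_deg_def algebra_simps)
  qed
  have m0: "m 0 = (0, 0)"
    using m by (simp add: moore_algebra_def)
  have "graded_ring_hom (pgrading (Ro_deg d)) G f \<and> push f Ao = m \<longleftrightarrow> f = poly_eval g"
    for f :: "(nat + nat) zpoly \<Rightarrow> 'r"
  proof -
    have "graded_ring_hom (pgrading (Ro_deg d)) G f \<and> push f Ao = m \<longleftrightarrow>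
        graded_ring_hom (pgrading (Ro_deg d)) G f \<and> (\<forall>x. f (pvar x) = g x)"
      using graded_ring_hom_zero[of _ G f]
        push_Ao_eq_iff[where m = m, OF _ m0 moore_algebra_odd_eq_zero[OF G m d]]
      by (auto simp: g_def split: sum.split)
    also have "\<dots> \<longleftrightarrow> f = poly_eval g"
      by (rule graded_ring_hom_pvar_iff[OF G g])
    finally show ?thesis .
  qed
  then show ?thesis
    by simp
qed

theorem mainTheorem9:
  fixes d :: int
  shows
   "(even d \<longrightarrow>
       evenly_graded (pgrading (Re_deg d)) \<and>
       moore_algebra (pgrading (Re_deg d)) d Ae \<and>
       (\<forall>(G :: int \<Rightarrow> 'r::comm_ring_1 set) (m :: nat \<Rightarrow> 'r \<times> 'r).
          evenly_graded G \<and> moore_algebra G d m \<longrightarrow>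
          (\<exists>!f. graded_ring_hom (pgrading (Re_deg d)) G f \<and> push f Ae = m))) \<and>
    (odd d \<longrightarrow>
       evenly_graded (pgrading (Ro_deg d)) \<and>
       moore_algebra (pgrading (Ro_deg d)) d Ao \<and>
       (\<forall>(G :: int \<Rightarrow> 'r::comm_ring_1 set) (m :: nat \<Rightarrow> 'r \<times> 'r).
          evenly_graded G \<and> moore_algebra G d m \<longrightarrow>
          (\<exists>!f. graded_ring_hom (pgrading (Ro_deg d)) G f \<and> push f Ao = m)))"
proof (intro conjI impI)
  assume d: "even d"
  show "evenly_graded (pgrading (Re_deg d))"
    by (rule evenly_graded_pgrading) (use d in \<open>simp add: Re_deg_def\<close>)
  show "moore_algebra (pgrading (Re_deg d)) d Ae"
    using d by (rule moore_algebra_Ae)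
  show "\<forall>(G :: int \<Rightarrow> 'r::comm_ring_1 set) m. evenly_graded G \<and> moore_algebra G d m \<longrightarrow>
      (\<exists>!f. graded_ring_hom (pgrading (Re_deg d)) G f \<and> push f Ae = m)"
    using Ae_universal[OF d] by blast
next
  assume d: "odd d"
  show "evenly_graded (pgrading (Ro_deg d))"
    by (rule evenly_graded_pgrading) (use d in \<open>simp add: Ro_deg_def split: sum.split\<close>)
  show "moore_algebra (pgrading (Ro_deg d)) d Ao"
    using d by (rule moore_algebra_Ao)
  show "\<forall>(G :: int \<Rightarrow> 'r::comm_ring_1 set) m. evenly_graded G \<and> moore_algebra G d m \<longrightarrow>
      (\<exists>!f. graded_ring_hom (pgrading (Ro_deg d)) G f \<and> push f Ao = m)"
    using Ao_universal[OF d] by blast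
qed

end
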